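(* Let $(S,\le)$ be a dcwo, $g:S\rightharpoonup S$ a partial monotonic map, and $s\in S$. Let $G$ be the family of all elements $g^n(s)$, for those $n\in\mathbb N$ such that $g^n(s)$ is defined. Then there are finitely many directed subfamilies $G_0,G_1,\dots,G_{m-1}$ of $G$ such that: (1) $cl(G)=\bigcup_{j=0}^{m-1}cl(G_j)=\downarrow\{\bigvee G_0,\bigvee G_1,\dots,\bigvee G_{m-1}\}$; (2) each $G_j$ is either a one-element set $\{g^{p_j}(s)\}$ with $p_j\in\mathbb N$, or a chain of the form $\{g^{p_j+\ell q_j}(s)\mid \ell\in\mathbb N\}$ where $p_j\in\mathbb N$, $q_j\in\mathbb N\setminus\{0\}$ and $g^{p_j}(s)<g^{p_j+q_j}(s)$; (3) for every $j$ with $0\le j<m$, $s\not< g^{p_j}(s)$.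
   Context: A dcwo is a partial order which is well (well-founded, no infinite antichain) and a dcpo (every directed subset $D$ has a least upper bound $\bigvee D$). A partial monotonic map has an upward-closed domain and is monotone on its domain. $cl$ denotes closure in the Scott topology (open sets: upward-closed sets $U$ meeting every directed set whose lub lies in $U$). *)

theory Defs
  imports Main
begin

definition directed :: "'a::order set \<Rightarrow> bool" where
  "directed D \<longleftrightarrow> D \<noteq> {} \<and> (\<forall>x\<in>D. \<forall>y\<in>D. \<exists>z\<in>D. x \<le> z \<and> y \<le> z)"

definition is_lub :: "'a::order set \<Rightarrow> 'a \<Rightarrow> bool" where
  "is_lub D u \<longleftrightarrow> (\<forall>x\<in>D. x \<le> u) \<and> (\<forall>v. (\<forall>x\<in>D. x \<le> v) \<longrightarrow> u \<le> v)"

definition lub :: "'a::order set \<Rightarrow> 'a" where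
  "lub D = (THE u. is_lub D u)"

definition antichain :: "'a::order set \<Rightarrow> bool" where
  "antichain A \<longleftrightarrow> (\<forall>x\<in>A. \<forall>y\<in>A. x \<noteq> y \<longrightarrow> \<not> x \<le> y)"

definition well_po :: "'a::order itself \<Rightarrow> bool" where
  "well_po _ \<longleftrightarrow> wfP ((<) :: 'a \<Rightarrow> 'a \<Rightarrow> bool) \<and> (\<forall>A::'a set. antichain A \<longrightarrow> finite A)"

definition dcpo :: "'a::order itself \<Rightarrow> bool" where
  "dcpo _ \<longleftrightarrow> (\<forall>D::'a set. directed D \<longrightarrow> (\<exists>u. is_lub D u))"

definition dcwo :: "'a::order itself \<Rightarrow> bool" where
  "dcwo T \<longleftrightarrow> well_po T \<and> dcpo T"

definition up_closed :: "'a::order set \<Rightarrow> bool" where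
  "up_closed U \<longleftrightarrow> (\<forall>x y. x \<in> U \<longrightarrow> x \<le> y \<longrightarrow> y \<in> U)"

definition partial_monotonic :: "('a::order \<Rightarrow> 'a option) \<Rightarrow> bool" where
  "partial_monotonic g \<longleftrightarrow> up_closed (dom g) \<and>
     (\<forall>x y. x \<in> dom g \<longrightarrow> x \<le> y \<longrightarrow> the (g x) \<le> the (g y))"

primrec iter :: "('a \<Rightarrow> 'a option) \<Rightarrow> nat \<Rightarrow> 'a \<Rightarrow> 'a option" where
  "iter g 0 s = Some s"
| "iter g (Suc n) s = Option.bind (iter g n s) g"

definition scott_open :: "'a::order set \<Rightarrow> bool" where
  "scott_open U \<longleftrightarrow> up_closed U \<and>
     (\<forall>D. directed D \<longrightarrow> (\<exists>u. is_lub D u \<and> u \<in> U) \<longrightarrow> D \<inter> U \<noteq> {})"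

definition scott_closed :: "'a::order set \<Rightarrow> bool" where
  "scott_closed C \<longleftrightarrow> scott_open (- C)"

definition scott_cl :: "'a::order set \<Rightarrow> 'a set" where
  "scott_cl A = \<Inter>{C. scott_closed C \<and> A \<subseteq> C}"

definition downset :: "'a::order set \<Rightarrow> 'a set" where
  "downset X = {y. \<exists>x\<in>X. y \<le> x}"

end

theory Submission
  imports Defs
begin

text \<open>
  A downset of finitely many points is Scott closed, so the Scott closure of a finite union of
  directed sets is the downset of their lubs; it therefore suffices to split the orbit
  \<open>s, g(s), g\<^sup>2(s), \<dots>\<close> into finitely many directed pieces. Since the order is well, either
  the orbit is finite, or some iterate lies above an earlier one. Take the first such iterate,
  \<open>g\<^sup>P(s) \<le> g\<^sup>P\<^sup>+\<^sup>q(s)\<close>: by monotonicity of \<open>g\<close> the orbit from \<open>P\<close> on is defined and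
  consists of the \<open>q\<close> increasing chains \<open>g\<^sup>j\<^sup>+\<^sup>l\<^sup>q(s)\<close>, \<open>P \<le> j < P + q\<close>, and by minimality
  no \<open>g\<^sup>n(s)\<close> with \<open>0 < n < P + q\<close> lies above \<open>s = g\<^sup>0(s)\<close>.
\<close>

section \<open>Scott closure of a finite union of directed sets\<close>

lemma lub_eqI: "is_lub D (u::'a::order) \<Longrightarrow> lub D = u"
  unfolding lub_def by (rule the_equality) (auto simp: is_lub_def intro: order_antisym)

lemma dcpo_is_lub_lub: "dcpo TYPE('a::order) \<Longrightarrow> directed (D::'a set) \<Longrightarrow> is_lub D (lub D)"
  unfolding dcpo_def using lub_eqI by metis

lemma scott_cl_least: "scott_closed C \<Longrightarrow> A \<subseteq> C \<Longrightarrow> scott_cl A \<subseteq> C"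
  by (auto simp: scott_cl_def)

lemma scott_cl_mono: "A \<subseteq> B \<Longrightarrow> scott_cl A \<subseteq> scott_cl B"
  by (auto simp: scott_cl_def)

lemma scott_closed_downward: "scott_closed C \<Longrightarrow> x \<in> C \<Longrightarrow> y \<le> x \<Longrightarrow> y \<in> C"
  unfolding scott_closed_def scott_open_def up_closed_def by blast

lemma scott_closed_lub: "scott_closed C \<Longrightarrow> directed D \<Longrightarrow> D \<subseteq> C \<Longrightarrow> is_lub D u \<Longrightarrow> u \<in> C"
  unfolding scott_closed_def scott_open_def by blast

lemma below_lub_in_scott_cl:
  assumes "directed D" "is_lub D u" "y \<le> u"
  shows "y \<in> scott_cl D"
  unfolding scott_cl_def using assms scott_closed_lub scott_closed_downward by blast

lemma directed_bounded_in_finite_downset: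
  assumes "finite F" "directed D" "D \<subseteq> downset F"
  shows "\<exists>f\<in>F. \<forall>d\<in>D. d \<le> (f::'a::order)"
  using assms
proof (induction F rule: finite_induct)
  case empty
  then show ?case by (auto simp: downset_def directed_def)
next
  case (insert f F)
  show ?case
  proof (rule ccontr)
    assume "\<not> ?case"
    then obtain d1 where d1: "d1 \<in> D" "\<not> d1 \<le> f" by auto
    have "\<not> D \<subseteq> downset F"
      using insert.IH insert.prems(1) \<open>\<not> ?case\<close> by blast
    then obtain d2 where d2: "d2 \<in> D" "d2 \<notin> downset F" by auto
    obtain d3 where d3: "d3 \<in> D" "d1 \<le> d3" "d2 \<le> d3"
      using insert.prems(1) d1 d2 unfolding directed_def by blast
    then have "d3 \<le> f \<or> d3 \<in> downset F"
      using insert.prems(2) by (auto simp: downset_def)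
    then show False
      using d1 d2 d3 by (auto simp: downset_def intro: order_trans)
  qed
qed

lemma scott_closed_downset:
  assumes "finite (F::'a::order set)"
  shows "scott_closed (downset F)"
  unfolding scott_closed_def scott_open_def
proof (intro conjI allI impI)
  show "up_closed (- downset F)"
    unfolding up_closed_def downset_def by (auto intro: order_trans)
next
  fix D assume "directed D" and "\<exists>u. is_lub D u \<and> u \<in> - downset F"
  then obtain u where u: "is_lub D u" "u \<notin> downset F" by auto
  show "D \<inter> - downset F \<noteq> {}"
  proof
    assume "D \<inter> - downset F = {}"
    then obtain f where "f \<in> F" "\<forall>d\<in>D. d \<le> f"
      using directed_bounded_in_finite_downset[OF assms \<open>directed D\<close>] by blast
    then show False using u by (auto simp: is_lub_def downset_def)
  qed
qed

lemma scott_cl_UN_directed: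
  fixes m :: nat and D :: "nat \<Rightarrow> 'a::order set"
  assumes dcpo: "dcpo TYPE('a)" and dir: "\<forall>j<m. directed (D j)"
  shows "scott_cl (\<Union>j<m. D j) = (\<Union>j<m. scott_cl (D j))"
    and "scott_cl (\<Union>j<m. D j) = downset {lub (D j) | j. j < m}"
proof -
  let ?U = "downset {lub (D j) | j. j < m}"
  have lub: "is_lub (D j) (lub (D j))" if "j < m" for j
    using dcpo_is_lub_lub[OF dcpo] dir that by simp
  have "finite {lub (D j) | j. j < m}"
    by (rule finite_image_set) (rule finite_Collect_less_nat)
  moreover have "(\<Union>j<m. D j) \<subseteq> ?U"
    using lub unfolding downset_def is_lub_def by fast
  ultimately have cl_U: "scott_cl (\<Union>j<m. D j) \<subseteq> ?U"
    by (intro scott_cl_least scott_closed_downset)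
  have U_cl: "?U \<subseteq> (\<Union>j<m. scott_cl (D j))"
  proof
    fix y assume "y \<in> ?U"
    then obtain j where "j < m" "y \<le> lub (D j)"
      unfolding downset_def by blast
    then have "y \<in> scott_cl (D j)"
      using below_lub_in_scott_cl[OF _ lub] dir by blast
    with \<open>j < m\<close> show "y \<in> (\<Union>j<m. scott_cl (D j))"
      by blast
  qed
  have cl_cl: "(\<Union>j<m. scott_cl (D j)) \<subseteq> scott_cl (\<Union>j<m. D j)"
    by (intro UN_least scott_cl_mono) auto
  show "scott_cl (\<Union>j<m. D j) = (\<Union>j<m. scott_cl (D j))"
    using order_trans[OF cl_U U_cl] cl_cl by (rule subset_antisym)
  show "scott_cl (\<Union>j<m. D j) = ?U"
    using cl_U order_trans[OF U_cl cl_cl] by (rule subset_antisym)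
qed

lemma directed_range_mono:
  "mono (f :: 'a::linorder \<Rightarrow> 'b::order) \<Longrightarrow> directed (range f)"
  unfolding directed_def by (metis UNIV_I empty_iff image_eqI max.cobounded1 max.cobounded2 monoD
      rangeE)

section \<open>Well orders contain no bad sequences\<close>

lemma well_po_good_pair:
  fixes f :: "nat \<Rightarrow> 'a::order"
  assumes "well_po TYPE('a)"
  shows "\<exists>i j. i < j \<and> f i \<le> f j"
proof (rule ccontr)
  assume "\<not> ?thesis"
  then have bad: "\<And>i j. i < j \<Longrightarrow> \<not> f i \<le> f j" by blast
  have wf: "wfP ((<) :: 'a \<Rightarrow> 'a \<Rightarrow> bool)" and ac: "\<And>A::'a set. antichain A \<Longrightarrow> finite A"
    using assms unfolding well_po_def by auto
  have "inj f"
    by (rule injI) (metis bad linorder_neqE_nat order_refl)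
  \<comment> \<open>The indices after which \<open>f\<close> never drops form an antichain, hence are bounded;
      beyond the bound \<open>f\<close> would descend forever.\<close>
  define T where "T = {i. \<forall>j>i. \<not> f j < f i}"
  have "antichain (f ` T)"
    unfolding antichain_def
  proof (intro ballI impI)
    fix a b assume "a \<in> f ` T" "b \<in> f ` T" "a \<noteq> b"
    then obtain i k where ik: "k \<in> T" "a = f i" "b = f k" "i \<noteq> k" by auto
    show "\<not> a \<le> b"
    proof
      assume "a \<le> b"
      consider "i < k" | "k < i"
        using \<open>i \<noteq> k\<close> by linarith
      then show False
      proof cases
        case 1
        then show False using bad \<open>a \<le> b\<close> ik by auto
      next
        case 2
        then show False
          using \<open>a \<le> b\<close> \<open>a \<noteq> b\<close> ik unfolding T_def by (auto simp: order_less_le)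
      qed
    qed
  qed
  then have "finite T"
    using ac \<open>inj f\<close> finite_imageD inj_on_subset subset_UNIV by metis
  then obtain N where N: "\<forall>i\<in>T. i < N"
    using finite_nat_set_iff_bounded by blast
  obtain z where z: "z \<in> f ` {N..}" "\<forall>y. y < z \<longrightarrow> y \<notin> f ` {N..}"
    using wfp_eq_minimal[THEN iffD1, OF wf, rule_format, of "f N" "f ` {N..}"] by blast
  then obtain i where "N \<le> i" "z = f i" by auto
  moreover from this N obtain j where "j > i" "f j < f i"
    unfolding T_def by fastforce
  ultimately show False
    using z(2) by auto
qed

section \<open>Iterates of a partial monotonic map\<close>

lemma iter_add: "iter g (m + n) s = Option.bind (iter g m s) (iter g n)"
  by (induction n) auto

lemma iter_None_mono: "iter g m s = None \<Longrightarrow> m \<le> n \<Longrightarrow> iter g n s = None"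
  using iter_add[of g m "n - m" s] by simp

lemma iter_mono:
  assumes pm: "partial_monotonic g"
  shows "iter g k a = Some a' \<Longrightarrow> a \<le> b \<Longrightarrow> \<exists>b'. iter g k b = Some b' \<and> a' \<le> b'"
proof (induction k arbitrary: a')
  case 0
  then show ?case by auto
next
  case (Suc k)
  then obtain a1 where a1: "iter g k a = Some a1" "g a1 = Some a'"
    by (cases "iter g k a") auto
  obtain b1 where b1: "iter g k b = Some b1" "a1 \<le> b1"
    using Suc.IH[OF a1(1)] Suc.prems by blast
  have "a1 \<in> dom g" using a1 by auto
  then obtain b' where "g b1 = Some b'" "the (g a1) \<le> the (g b1)"
    using pm b1 unfolding partial_monotonic_def up_closed_def by blast
  then show ?case using a1 b1 by auto
qed

lemma iter_shift_le:
  assumes pm: "partial_monotonic g"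
    and a: "iter g P s = Some a" and b: "iter g (P + q) s = Some b" and "a \<le> b"
    and "P \<le> r" and c: "iter g r s = Some c"
  shows "\<exists>c'. iter g (r + q) s = Some c' \<and> c \<le> c'"
proof -
  have "iter g (r - P) a = Some c"
    using iter_add[of g P "r - P" s] a c \<open>P \<le> r\<close> by simp
  then obtain c' where c': "iter g (r - P) b = Some c'" "c \<le> c'"
    using iter_mono[OF pm _ \<open>a \<le> b\<close>] by blast
  have "iter g (r + q) s = iter g (P + q + (r - P)) s"
    using \<open>P \<le> r\<close> by (simp add: algebra_simps)
  then have "iter g (r + q) s = Some c'"
    using iter_add[of g "P + q" "r - P" s] b c' by simp
  then show ?thesis using c' by blast
qed

lemma iter_period:
  assumes "iter g r s = iter g (r + q) s"
  shows "iter g (r + l * q) s = iter g r s"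
proof (induction l)
  case (Suc l)
  have "iter g (r + Suc l * q) s = Option.bind (iter g (r + q) s) (iter g (l * q))"
    using iter_add[of g "r + q" "l * q" s] by (simp add: algebra_simps)
  also have "\<dots> = iter g (r + l * q) s"
    using iter_add[of g r "l * q" s] assms by simp
  finally show ?case using Suc by simp
qed simp

section \<open>Splitting the orbit into finitely many directed pieces\<close>

definition orbit :: "('a \<Rightarrow> 'a option) \<Rightarrow> 'a \<Rightarrow> 'a set" where
  "orbit g s = {x. \<exists>n. iter g n s = Some x}"

definition orbit_cut :: "('a::order \<Rightarrow> 'a option) \<Rightarrow> 'a \<Rightarrow> nat \<Rightarrow> nat \<Rightarrow> bool" where
  "orbit_cut g s P q \<longleftrightarrow> (\<forall>n<P + q. iter g n s \<noteq> None) \<and>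
     (if q = 0 then iter g P s = None
      else iter g (P + q) s \<noteq> None \<and> the (iter g P s) \<le> the (iter g (P + q) s))"

definition orbit_part :: "('a \<Rightarrow> 'a option) \<Rightarrow> 'a \<Rightarrow> nat \<Rightarrow> nat \<Rightarrow> nat \<Rightarrow> 'a set" where
  "orbit_part g s P q j =
     (if j < P then {the (iter g j s)} else {the (iter g (j + l * q) s) | l. True})"

lemma exists_orbit_cut:
  assumes "well_po TYPE('a::order)"
  obtains P q where "orbit_cut g s P q" "\<forall>n<P + q. \<not> s < the (iter g n (s::'a))"
proof -
  let ?x = "\<lambda>n. the (iter g n s)"
  let ?good = "\<lambda>j. iter g j s \<noteq> None \<and> (\<exists>i<j. ?x i \<le> ?x j)"
  \<comment> \<open>for \<open>0 < n\<close>, \<open>s < g\<^sup>n(s)\<close> would make \<open>n\<close> good with \<open>i = 0\<close>\<close>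
  have not_above: "\<not> s < ?x n"
    if "\<forall>k<N. iter g k s \<noteq> None" "\<forall>k<N. \<not> ?good k" "n < N" for n N
    using that by (metis gr0I iter.simps(1) less_imp_le option.sel order_less_irrefl)
  show ?thesis
  proof (cases "\<exists>j. ?good j")
    case True
    define j where "j = (LEAST j. ?good j)"
    then obtain i where i: "i < j" "iter g j s \<noteq> None" "?x i \<le> ?x j"
      using LeastI_ex[OF True] by blast
    have defined: "\<forall>k<j. iter g k s \<noteq> None"
      using iter_None_mono i(2) by (meson less_imp_le)
    have "orbit_cut g s i (j - i)"
      unfolding orbit_cut_def using i defined by simp
    moreover have "\<forall>k<j. \<not> ?good k"
      using not_less_Least[where P = ?good] unfolding j_def by blast
    then have "\<forall>n<i + (j - i). \<not> s < ?x n"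
      using not_above[OF defined] i(1) by simp
    ultimately show ?thesis by (rule that)
  next
    case False
    have "\<exists>n. iter g n s = None"
      using well_po_good_pair[OF assms, of ?x] False by blast
    define P where "P = (LEAST n. iter g n s = None)"
    have cut: "orbit_cut g s P 0"
      unfolding orbit_cut_def P_def
      using LeastI_ex[OF \<open>\<exists>n. iter g n s = None\<close>] not_less_Least by auto
    moreover have "\<forall>n<P + 0. \<not> s < ?x n"
    proof -
      have "\<forall>k<P. iter g k s \<noteq> None"
        using cut unfolding orbit_cut_def by simp
      moreover have "\<forall>k<P. \<not> ?good k"
        using False by blast
      ultimately show ?thesis
        unfolding add_0_right using not_above[of P] by blast
    qed
    ultimately show ?thesis by (rule that)
  qed
qed

context
  fixes g :: "'a::order \<Rightarrow> 'a option" and s :: 'a and P q :: nat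
  assumes pm: "partial_monotonic g" and cut: "orbit_cut g s P q"
begin

lemma orbit_cut_SomeE:
  assumes "0 < q"
  obtains a b where "iter g P s = Some a" "iter g (P + q) s = Some b" "a \<le> b"
proof -
  have "iter g (P + q) s \<noteq> None" and le: "the (iter g P s) \<le> the (iter g (P + q) s)"
    using cut assms unfolding orbit_cut_def by auto
  moreover from this(1) have "iter g P s \<noteq> None"
    by (metis iter_None_mono le_add1)
  ultimately show ?thesis
    using that by auto
qed

lemma orbit_cut_defined:
  assumes "0 < q"
  shows "iter g n s \<noteq> None"
proof -
  obtain a b where a: "iter g P s = Some a" and b: "iter g (P + q) s = Some b" and "a \<le> b"
    using orbit_cut_SomeE[OF assms] .
  have "iter g (P + l * q) s \<noteq> None" for l
  proof (induction l)
    case (Suc l)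
    then obtain c where "iter g (P + l * q) s = Some c" by auto
    then show ?case
      using iter_shift_le[OF pm a b \<open>a \<le> b\<close>, of "P + l * q"] by (auto simp: algebra_simps)
  qed (use a in simp)
  moreover have "n \<le> P + n * q"
    using assms by (simp add: trans_le_add2)
  ultimately show ?thesis
    by (metis iter_None_mono)
qed

lemma orbit_cut_le_shift:
  assumes "0 < q" "P \<le> r"
  shows "the (iter g r s) \<le> the (iter g (r + q) s)"
proof -
  obtain a b where a: "iter g P s = Some a" and b: "iter g (P + q) s = Some b" and "a \<le> b"
    using orbit_cut_SomeE[OF assms(1)] .
  obtain c where c: "iter g r s = Some c"
    using orbit_cut_defined[OF assms(1), of r] by auto
  obtain c' where "iter g (r + q) s = Some c'" "c \<le> c'"
    using iter_shift_le[OF pm a b \<open>a \<le> b\<close> assms(2) c] by blast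
  then show ?thesis
    using c by simp
qed

lemma orbit_part_tail:
  assumes "\<not> j < P"
  shows "orbit_part g s P q j = range (\<lambda>l. the (iter g (j + l * q) s))"
  using assms unfolding orbit_part_def by auto

lemma directed_orbit_part: "directed (orbit_part g s P q j)"
proof (cases "j < P")
  case True
  then show ?thesis by (simp add: orbit_part_def directed_def)
next
  case False
  have "mono (\<lambda>l. the (iter g (j + l * q) s))"
  proof (cases "q = 0")
    case False
    have "the (iter g (j + l * q) s) \<le> the (iter g (j + Suc l * q) s)" for l
      using orbit_cut_le_shift[of "j + l * q"] False \<open>\<not> j < P\<close> by (simp add: algebra_simps)
    then show ?thesis
      by (simp add: mono_iff_le_Suc)
  qed (simp add: mono_def)
  then show ?thesis
    using orbit_part_tail[OF False] directed_range_mono by simp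
qed

lemma orbit_eq_UN_orbit_part: "orbit g s = (\<Union>j<P + q. orbit_part g s P q j)"
proof
  show "(\<Union>j<P + q. orbit_part g s P q j) \<subseteq> orbit g s"
  proof (intro UN_least subsetI)
    fix j y assume j: "j \<in> {..<P + q}" and y: "y \<in> orbit_part g s P q j"
    show "y \<in> orbit g s"
    proof (cases "j < P")
      case True
      then have "y = the (iter g j s)"
        using y by (simp add: orbit_part_def)
      moreover have "iter g j s \<noteq> None"
        using cut j unfolding orbit_cut_def by simp
      ultimately show ?thesis
        unfolding orbit_def by auto
    next
      case False
      then have "0 < q"
        using j by simp
      obtain l where "y = the (iter g (j + l * q) s)"
        using y orbit_part_tail[OF False] by auto
      then show ?thesis
        using orbit_cut_defined[OF \<open>0 < q\<close>] unfolding orbit_def by auto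
    qed
  qed
next
  show "orbit g s \<subseteq> (\<Union>j<P + q. orbit_part g s P q j)"
  proof
    fix y assume "y \<in> orbit g s"
    then obtain n where n: "iter g n s = Some y" unfolding orbit_def by blast
    show "y \<in> (\<Union>j<P + q. orbit_part g s P q j)"
    proof (cases "n < P")
      case True
      then show ?thesis using n by (intro UN_I[of n]) (auto simp: orbit_part_def)
    next
      case False
      then have "0 < q"
        using cut n iter_None_mono[of g P s n] unfolding orbit_cut_def by (auto split: if_splits)
      define j where "j = P + (n - P) mod q"
      have "n = j + (n - P) div q * q"
        unfolding j_def using False by simp
      then have "iter g (j + (n - P) div q * q) s = Some y"
        using n by simp
      moreover have "j < P + q" "\<not> j < P"
        unfolding j_def using \<open>0 < q\<close> by auto
      ultimately have "y \<in> orbit_part g s P q j"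
        unfolding orbit_part_tail[OF \<open>\<not> j < P\<close>]
        by (intro range_eqI[of _ _ "(n - P) div q"]) simp
      then show ?thesis
        using \<open>j < P + q\<close> by blast
    qed
  qed
qed

lemma orbit_part_cases:
  assumes "j < P + q"
  shows "iter g j s \<noteq> None \<and>
   (orbit_part g s P q j = {the (iter g j s)} \<or>
    (0 < q \<and> (\<forall>l. iter g (j + l * q) s \<noteq> None) \<and>
     orbit_part g s P q j = {the (iter g (j + l * q) s) | l. True} \<and>
     the (iter g j s) < the (iter g (j + q) s)))"
proof (cases "j < P")
  case True
  then show ?thesis
    using cut assms by (simp add: orbit_part_def orbit_cut_def)
next
  case False
  then have "0 < q" using assms by simp
  have le: "the (iter g j s) \<le> the (iter g (j + q) s)"
    using orbit_cut_le_shift[OF \<open>0 < q\<close>] False by simp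
  show ?thesis
  proof (cases "the (iter g j s) = the (iter g (j + q) s)")
    case True
    then have "iter g j s = iter g (j + q) s"
      by (rule option.expand[rotated]) (simp add: orbit_cut_defined[OF \<open>0 < q\<close>])
    then have "orbit_part g s P q j = {the (iter g j s)}"
      using orbit_part_tail[OF False] by (simp add: iter_period)
    then show ?thesis
      using orbit_cut_defined[OF \<open>0 < q\<close>, of j] by (intro conjI disjI1)
  next
    case False
    with le have "the (iter g j s) < the (iter g (j + q) s)"
      by simp
    then show ?thesis
      using \<open>0 < q\<close> \<open>\<not> j < P\<close> orbit_cut_defined[OF \<open>0 < q\<close>]
      unfolding orbit_part_def by (intro conjI disjI2) auto
  qed
qed

end

theorem lemma5p19:
  fixes g :: "'a::order \<Rightarrow> 'a option" and s :: 'a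
  assumes "dcwo TYPE('a)"
    and "partial_monotonic g"
  defines "G \<equiv> {x. \<exists>n. iter g n s = Some x}"
  shows "\<exists>(m::nat) (Gs :: nat \<Rightarrow> 'a set) (p :: nat \<Rightarrow> nat) (q :: nat \<Rightarrow> nat).
     (\<forall>j<m. Gs j \<subseteq> G \<and> directed (Gs j)) \<and>
     scott_cl G = (\<Union>j<m. scott_cl (Gs j)) \<and>
     scott_cl G = downset {lub (Gs j) | j. j < m} \<and>
     (\<forall>j<m. iter g (p j) s \<noteq> None \<and>
        (Gs j = {the (iter g (p j) s)} \<or>
         (q j > 0 \<and> (\<forall>l. iter g (p j + l * q j) s \<noteq> None) \<and>
          Gs j = {the (iter g (p j + l * q j) s) | l. True} \<and>
          the (iter g (p j) s) < the (iter g (p j + q j) s)))) \<and>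
     (\<forall>j<m. \<not> s < the (iter g (p j) s))"
proof -
  have dcpo: "dcpo TYPE('a)" and well: "well_po TYPE('a)"
    using assms(1) unfolding dcwo_def by auto
  obtain P q where cut: "orbit_cut g s P q" and not_above: "\<forall>n<P + q. \<not> s < the (iter g n s)"
    using exists_orbit_cut[OF well] .
  let ?Gs = "orbit_part g s P q"
  have G: "G = (\<Union>j<P + q. ?Gs j)"
    using orbit_eq_UN_orbit_part[OF assms(2) cut] unfolding G_def orbit_def .
  have dir: "\<forall>j<P + q. directed (?Gs j)"
    using directed_orbit_part[OF assms(2) cut] by blast
  show ?thesis
  proof (rule exI[of _ "P + q"], rule exI[of _ ?Gs], rule exI[of _ "\<lambda>j. j"],
      rule exI[of _ "\<lambda>_. q"], intro conjI)
    show "\<forall>j<P + q. ?Gs j \<subseteq> G \<and> directed (?Gs j)"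
      using dir unfolding G by blast
    show "scott_cl G = (\<Union>j<P + q. scott_cl (?Gs j))"
      unfolding G by (rule scott_cl_UN_directed(1)[OF dcpo dir])
    show "scott_cl G = downset {lub (?Gs j) | j. j < P + q}"
      unfolding G by (rule scott_cl_UN_directed(2)[OF dcpo dir])
    show "\<forall>j<P + q. iter g j s \<noteq> None \<and>
      (?Gs j = {the (iter g j s)} \<or>
       (0 < q \<and> (\<forall>l. iter g (j + l * q) s \<noteq> None) \<and>
        ?Gs j = {the (iter g (j + l * q) s) | l. True} \<and>
        the (iter g j s) < the (iter g (j + q) s)))"
      by (intro allI impI) (rule orbit_part_cases[OF assms(2) cut])
    show "\<forall>j<P + q. \<not> s < the (iter g j s)"
      by (fact not_above)
  qed
qed

end
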